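(* For all integers $m\ge 2$, $n\ge 2$, the state complexity of $L(M)^R\cap L(N)$, where $M$ ranges over complete DFAs with $m$ states and $N$ over complete DFAs with $n$ states (over a common alphabet), is exactly $2^m\cdot n-n+1$: for every such $M,N$ some DFA with at most $2^m\cdot n-n+1$ states accepts $L(M)^R\cap L(N)$, and there exist such $M,N$ for which the minimal complete DFA of $L(M)^R\cap L(N)$ has exactly $2^m\cdot n-n+1$ states.
   Context: DFAs are complete deterministic finite automata; $L(M)$ is the accepted language; $L^R=\{w^R: w\in L\}$ is the reversal of $L$. The state complexity of a regular language is the number of states of its minimal complete DFA; the state complexity of an operation is the maximum state complexity of its result over all argument DFAs of the given sizes. *)

theory Defs
  imports Main
begin

record ('s, 'a) dfa =
  states :: "'s set"
  start  :: 's
  delta  :: "'s \<Rightarrow> 'a \<Rightarrow> 's"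
  final  :: "'s set"

definition is_dfa :: "'a set \<Rightarrow> ('s, 'a) dfa \<Rightarrow> bool" where
  "is_dfa \<Sigma> M \<longleftrightarrow> finite \<Sigma> \<and> finite (states M) \<and> start M \<in> states M
     \<and> (\<forall>q\<in>states M. \<forall>a\<in>\<Sigma>. delta M q a \<in> states M) \<and> final M \<subseteq> states M"

definition delta_star :: "('s, 'a) dfa \<Rightarrow> 's \<Rightarrow> 'a list \<Rightarrow> 's" where
  "delta_star M q w = foldl (delta M) q w"

definition lang :: "'a set \<Rightarrow> ('s, 'a) dfa \<Rightarrow> 'a list set" where
  "lang \<Sigma> M = {w \<in> lists \<Sigma>. delta_star M (start M) w \<in> final M}"

definition reversal :: "'a list set \<Rightarrow> 'a list set" where
  "reversal L = rev ` L"

text \<open>State sets are taken inside nat, which is no loss of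
  generality since every finite state set can be renamed injectively into nat.\<close>

definition state_complexity :: "'a set \<Rightarrow> 'a list set \<Rightarrow> nat" where
  "state_complexity \<Sigma> L =
     (LEAST k. \<exists>D :: (nat, 'a) dfa. is_dfa \<Sigma> D \<and> card (states D) = k \<and> lang \<Sigma> D = L)"

end

theory Submission imports Defs "HOL-Library.Nat_Bijection" begin

(* Upper bound: after reading w, the only information needed about M is the set of
   states p from which M accepts rev w (a reverse subset construction), and about N
   the current state of N.  The empty set is a sink, so the pairs (S, q) with S nonempty
   plus one sink state give a DFA with (2^m - 1) * n + 1 states; renaming its states
   into nat yields the required DFA.

   Lower bound: a fooling-set argument.  Over a suitable alphabet (one letter per subset
   T of M's states, per state j of N, and per pair (p, j0)) the two-letter words
   "select j, then set T" are distinguished by the one-letter suffixes "test (p, j0)",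
   accepted exactly when p \<in> T and j = j0.  The (2^m - 1) * n such words with T nonempty,
   plus one word with T empty, force (2^m - 1) * n + 1 states in every DFA for the
   language; the upper-bound DFA attains this, which determines the state complexity. *)

lemma delta_star_Nil [simp]: "delta_star M q [] = q"
  by (simp add: delta_star_def)

lemma delta_star_Cons [simp]: "delta_star M q (a # w) = delta_star M (delta M q a) w"
  by (simp add: delta_star_def)

lemma delta_star_append: "delta_star M q (u @ v) = delta_star M (delta_star M q u) v"
  by (simp add: delta_star_def)

lemma delta_star_snoc: "delta_star M q (w @ [a]) = delta M (delta_star M q w) a"
  by (simp add: delta_star_def)

lemma delta_star_in_states:
  assumes "is_dfa \<Sigma> M" "q \<in> states M" "w \<in> lists \<Sigma>"
  shows "delta_star M q w \<in> states M"
  using assms(2,3) by (induction w arbitrary: q) (use assms(1) in \<open>auto simp: is_dfa_def\<close>)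

lemma in_reversal_iff [simp]: "w \<in> reversal L \<longleftrightarrow> rev w \<in> L"
  unfolding reversal_def by (metis image_iff rev_rev_ident)

definition rename :: "('s \<Rightarrow> nat) \<Rightarrow> ('s, 'a) dfa \<Rightarrow> (nat, 'a) dfa" where
  "rename h A = \<lparr>states = h ` states A, start = h (start A),
     delta = (\<lambda>x a. h (delta A (inv_into (states A) h x) a)), final = h ` final A\<rparr>"

lemma delta_star_rename:
  assumes "is_dfa \<Sigma> A" "inj_on h (states A)" "q \<in> states A" "w \<in> lists \<Sigma>"
  shows "delta_star (rename h A) (h q) w = h (delta_star A q w)"
  using assms(3,4)
proof (induction w arbitrary: q)
  case (Cons a w)
  have "delta (rename h A) (h q) a = h (delta A q a)"
    using Cons.prems assms(2) by (simp add: rename_def)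
  moreover have "delta A q a \<in> states A"
    using Cons.prems assms(1) by (auto simp: is_dfa_def)
  ultimately show ?case using Cons by simp
qed simp

lemma lang_rename:
  assumes A: "is_dfa \<Sigma> A" and h: "inj_on h (states A)"
  shows "lang \<Sigma> (rename h A) = lang \<Sigma> A"
proof (rule set_eqI)
  fix w
  show "w \<in> lang \<Sigma> (rename h A) \<longleftrightarrow> w \<in> lang \<Sigma> A"
  proof (cases "w \<in> lists \<Sigma>")
    case w: True
    have s: "start A \<in> states A" using A by (simp add: is_dfa_def)
    have run: "delta_star (rename h A) (start (rename h A)) w = h (delta_star A (start A) w)"
      using delta_star_rename[OF A h s w] by (simp add: rename_def)
    have "final A \<subseteq> states A" using A by (simp add: is_dfa_def)
    then have "h (delta_star A (start A) w) \<in> h ` final A \<longleftrightarrow> delta_star A (start A) w \<in> final A"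
      using inj_on_image_mem_iff[OF h delta_star_in_states[OF A s w]] by blast
    then show ?thesis using w run by (simp add: lang_def rename_def)
  qed (simp add: lang_def)
qed

lemma ex_nat_dfa:
  assumes A: "is_dfa \<Sigma> (A :: ('s, 'a) dfa)"
  shows "\<exists>D :: (nat, 'a) dfa. is_dfa \<Sigma> D \<and> card (states D) = card (states A) \<and> lang \<Sigma> D = lang \<Sigma> A"
proof -
  have "finite (states A)" using A by (simp add: is_dfa_def)
  then obtain h :: "'s \<Rightarrow> nat" where "bij_betw h (states A) {0..<card (states A)}"
    using ex_bij_betw_finite_nat by blast
  then have h: "inj_on h (states A)" by (simp add: bij_betw_def)
  have "is_dfa \<Sigma> (rename h A)" using A h unfolding is_dfa_def rename_def by auto
  moreover have "card (states (rename h A)) = card (states A)"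
    using h by (simp add: rename_def card_image)
  ultimately show ?thesis using lang_rename[OF A h] by blast
qed

section \<open>The upper bound: a DFA for the reversal of L(M) intersected with L(N)\<close>

text \<open>The states of M from which M accepts the reversal of w.  Thus rev w \<in> L(M)
  iff start M belongs to this set, and the set can be updated letter by letter.\<close>
definition rev_accepting :: "('s, 'a) dfa \<Rightarrow> 'a list \<Rightarrow> 's set" where
  "rev_accepting M w = {p \<in> states M. delta_star M p (rev w) \<in> final M}"

lemma rev_accepting_Nil:
  "is_dfa \<Sigma> M \<Longrightarrow> rev_accepting M [] = final M"
  by (auto simp: rev_accepting_def is_dfa_def)

lemma rev_accepting_snoc:
  assumes "is_dfa \<Sigma> M" "a \<in> \<Sigma>"
  shows "rev_accepting M (w @ [a]) = {p \<in> states M. delta M p a \<in> rev_accepting M w}"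
  using assms by (auto simp: rev_accepting_def is_dfa_def)

text \<open>Reverse subset construction for M run in parallel with N; None is the sink
  reached once the set of reverse-accepting states of M becomes empty.\<close>
definition rev_inter_dfa :: "('s, 'a) dfa \<Rightarrow> ('t, 'a) dfa \<Rightarrow> (('s set \<times> 't) option, 'a) dfa" where
  "rev_inter_dfa M N = \<lparr>states = insert None (Some ` ((Pow (states M) - {{}}) \<times> states N)),
     start = (if final M = {} then None else Some (final M, start N)),
     delta = (\<lambda>x a. case x of None \<Rightarrow> None | Some (S, q) \<Rightarrow>
        (let S' = {p \<in> states M. delta M p a \<in> S} in if S' = {} then None else Some (S', delta N q a))),
     final = {x. \<exists>S q. x = Some (S, q) \<and> start M \<in> S \<and> q \<in> final N \<and> S \<subseteq> states M \<and> q \<in> states N}\<rparr>"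

lemma delta_star_rev_inter_dfa:
  assumes M: "is_dfa \<Sigma> M" and "w \<in> lists \<Sigma>"
  shows "delta_star (rev_inter_dfa M N) (start (rev_inter_dfa M N)) w =
     (if rev_accepting M w = {} then None else Some (rev_accepting M w, delta_star N (start N) w))"
  using assms(2)
proof (induction w rule: rev_induct)
  case Nil
  then show ?case using rev_accepting_Nil[OF M] by (simp add: rev_inter_dfa_def)
next
  case (snoc a w)
  then have "a \<in> \<Sigma>" "w \<in> lists \<Sigma>" by auto
  then show ?case
    using snoc.IH rev_accepting_snoc[OF M, of a w]
    by (simp add: delta_star_snoc rev_inter_dfa_def Let_def)
qed

lemma rev_inter_dfa_is_dfa:
  "is_dfa \<Sigma> M \<Longrightarrow> is_dfa \<Sigma> N \<Longrightarrow> is_dfa \<Sigma> (rev_inter_dfa M N)"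
  unfolding is_dfa_def rev_inter_dfa_def by (auto simp: Let_def split: option.splits)

lemma card_rev_inter_dfa:
  assumes "finite (states M)" "finite (states N)"
  shows "card (states (rev_inter_dfa M N)) = (2 ^ card (states M) - 1) * card (states N) + 1"
  using assms by (simp add: rev_inter_dfa_def card_image card_cartesian_product card_Pow)

lemma final_rev_inter_dfa:
  "x \<in> final (rev_inter_dfa M N) \<longleftrightarrow>
     (\<exists>S q. x = Some (S, q) \<and> start M \<in> S \<and> q \<in> final N \<and> S \<subseteq> states M \<and> q \<in> states N)"
  by (simp add: rev_inter_dfa_def)

lemma lang_rev_inter_dfa:
  assumes M: "is_dfa \<Sigma> M" and N: "is_dfa \<Sigma> N"
  shows "lang \<Sigma> (rev_inter_dfa M N) = reversal (lang \<Sigma> M) \<inter> lang \<Sigma> N"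
proof (rule set_eqI)
  fix w
  show "w \<in> lang \<Sigma> (rev_inter_dfa M N) \<longleftrightarrow> w \<in> reversal (lang \<Sigma> M) \<inter> lang \<Sigma> N"
  proof (cases "w \<in> lists \<Sigma>")
    case w: True
    have "start M \<in> states M" "start N \<in> states N" using M N by (auto simp: is_dfa_def)
    moreover have "delta_star N (start N) w \<in> states N"
      using delta_star_in_states[OF N _ w] N by (simp add: is_dfa_def)
    moreover have "rev w \<in> lists \<Sigma>" using w by (simp add: in_lists_conv_set)
    ultimately show ?thesis
      using w delta_star_rev_inter_dfa[OF M w, of N]
      by (auto simp: lang_def final_rev_inter_dfa rev_accepting_def)
  qed (auto simp: lang_def)
qed

theorem rev_inter_upper_bound:
  assumes M: "is_dfa \<Sigma> (M :: ('s, 'a) dfa)" and N: "is_dfa \<Sigma> (N :: ('t, 'a) dfa)"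
  shows "\<exists>D :: (nat, 'a) dfa. is_dfa \<Sigma> D
           \<and> card (states D) = (2 ^ card (states M) - 1) * card (states N) + 1
           \<and> lang \<Sigma> D = reversal (lang \<Sigma> M) \<inter> lang \<Sigma> N"
proof -
  have "card (states (rev_inter_dfa M N)) = (2 ^ card (states M) - 1) * card (states N) + 1"
    using M N by (intro card_rev_inter_dfa) (auto simp: is_dfa_def)
  then show ?thesis
    using ex_nat_dfa[OF rev_inter_dfa_is_dfa[OF M N]] lang_rev_inter_dfa[OF M N] by simp
qed

section \<open>Lower bounds by distinguishable words\<close>

lemma distinguishable_words_card_le:
  assumes D: "is_dfa \<Sigma> D" and x: "\<And>i. i \<in> I \<Longrightarrow> x i \<in> lists \<Sigma>"
    and dist: "\<And>i j. i \<in> I \<Longrightarrow> j \<in> I \<Longrightarrow> i \<noteq> j \<Longrightarrow>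
                 \<exists>z \<in> lists \<Sigma>. (x i @ z \<in> lang \<Sigma> D) \<noteq> (x j @ z \<in> lang \<Sigma> D)"
  shows "card I \<le> card (states D)"
proof -
  let ?f = "\<lambda>i. delta_star D (start D) (x i)"
  have "inj_on ?f I"
  proof (rule inj_onI, rule ccontr)
    fix i j assume "i \<in> I" "j \<in> I" "?f i = ?f j" "i \<noteq> j"
    then show False
      using dist[of i j] x by (auto simp: lang_def delta_star_append)
  qed
  moreover have "?f ` I \<subseteq> states D"
    using delta_star_in_states[OF D] D x by (auto simp: is_dfa_def)
  ultimately show ?thesis
    using D card_inj_on_le unfolding is_dfa_def by blast
qed

lemma state_complexity_eqI:
  assumes "is_dfa \<Sigma> (D :: (nat, 'a) dfa)" "card (states D) = k" "lang \<Sigma> D = L"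
    and "\<And>D' :: (nat, 'a) dfa. is_dfa \<Sigma> D' \<Longrightarrow> lang \<Sigma> D' = L \<Longrightarrow> k \<le> card (states D')"
  shows "state_complexity \<Sigma> L = k"
  unfolding state_complexity_def
  by (rule Least_equality) (use assms in auto)

section \<open>The witness automata\<close>

text \<open>The alphabet is encoded in nat by residues mod 3: a letter "set T" for each
  subset T of M's states, "select j" for each state j of N, and "test (p, j)".\<close>
definition set_letter :: "nat set \<Rightarrow> nat" where "set_letter T = 3 * set_encode T"
definition select_letter :: "nat \<Rightarrow> nat" where "select_letter j = 3 * j + 1"
definition test_letter :: "nat \<Rightarrow> nat \<Rightarrow> nat \<Rightarrow> nat" where "test_letter m p j = 3 * (p + m * j) + 2"

definition witness_alphabet :: "nat \<Rightarrow> nat \<Rightarrow> nat set" where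
  "witness_alphabet m n = set_letter ` Pow {..<m} \<union> select_letter ` {..<n}
     \<union> (\<lambda>(p, j). test_letter m p j) ` ({..<m} \<times> {..<n})"

text \<open>M: "test (p, j)" moves to p, "set T" moves to 0 iff the current state is in T
  (to 1 otherwise), "select j" does nothing.  So M accepts the reversal of
  [select j, set T, test (p, j0)] iff p \<in> T.\<close>
definition witness_M :: "nat \<Rightarrow> (nat, nat) dfa" where
  "witness_M m = \<lparr>states = {..<m}, start = 0,
     delta = (\<lambda>p x. if x mod 3 = 0 then (if p \<in> set_decode (x div 3) then 0 else 1)
                    else if x mod 3 = 1 then p else (x div 3) mod m),
     final = {0}\<rparr>"

text \<open>N: "select j" moves to j, "set T" does nothing, "test (p, j0)" moves to 0 iff
  the current state is j0 (to 1 otherwise).  So N accepts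
  [select j, set T, test (p, j0)] iff j = j0.\<close>
definition witness_N :: "nat \<Rightarrow> nat \<Rightarrow> (nat, nat) dfa" where
  "witness_N m n = \<lparr>states = {..<n}, start = 0,
     delta = (\<lambda>q x. if x mod 3 = 0 then q else if x mod 3 = 1 then (x div 3) mod n
                    else if q = ((x div 3) div m) mod n then 0 else 1),
     final = {0}\<rparr>"

lemma witness_M_is_dfa: "m \<ge> 2 \<Longrightarrow> is_dfa (witness_alphabet m n) (witness_M m)"
  by (auto simp: is_dfa_def witness_M_def witness_alphabet_def)

lemma witness_N_is_dfa: "n \<ge> 2 \<Longrightarrow> is_dfa (witness_alphabet m n) (witness_N m n)"
  by (auto simp: is_dfa_def witness_N_def witness_alphabet_def)

lemma card_witness_states:
  "card (states (witness_M m)) = m" "card (states (witness_N m n)) = n"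
  by (simp_all add: witness_M_def witness_N_def)

lemma letter_codes:
  "set_letter T mod 3 = 0" "set_letter T div 3 = set_encode T"
  "select_letter j mod 3 = 1" "select_letter j div 3 = j"
  "test_letter m p j mod 3 = 2" "test_letter m p j div 3 = p + m * j"
  unfolding set_letter_def select_letter_def test_letter_def by simp_all presburger

lemma delta_witness_M:
  "finite T \<Longrightarrow> delta (witness_M m) q (set_letter T) = (if q \<in> T then 0 else 1)"
  "delta (witness_M m) q (select_letter j) = q"
  "p < m \<Longrightarrow> delta (witness_M m) q (test_letter m p j) = p"
  by (simp_all add: witness_M_def letter_codes set_encode_inverse)

lemma delta_witness_N:
  "delta (witness_N m n) q (set_letter T) = q"
  "j < n \<Longrightarrow> delta (witness_N m n) q (select_letter j) = j"
  "p < m \<Longrightarrow> j < n \<Longrightarrow> delta (witness_N m n) q (test_letter m p j) = (if q = j then 0 else 1)"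
  by (simp_all add: witness_N_def letter_codes)

lemma witness_acceptance:
  assumes "m \<ge> 2" "n \<ge> 2" "T \<subseteq> {..<m}" "j < n" "p < m" "j0 < n"
  shows "[select_letter j, set_letter T, test_letter m p j0]
           \<in> reversal (lang (witness_alphabet m n) (witness_M m)) \<inter> lang (witness_alphabet m n) (witness_N m n)
         \<longleftrightarrow> p \<in> T \<and> j = j0"
proof -
  have "finite T" using assms(3) finite_subset by blast
  then have
    "delta_star (witness_M m) 0 [test_letter m p j0, set_letter T, select_letter j] = (if p \<in> T then 0 else 1)"
    "delta_star (witness_N m n) 0 [select_letter j, set_letter T, test_letter m p j0] = (if j = j0 then 0 else 1)"
    using assms by (simp_all add: delta_witness_M delta_witness_N)
  moreover have "[select_letter j, set_letter T, test_letter m p j0] \<in> lists (witness_alphabet m n)"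
    using assms unfolding witness_alphabet_def by auto
  ultimately show ?thesis
    by (auto simp: lang_def witness_M_def witness_N_def)
qed

text \<open>Index set of the fooling words: all pairs (T, j) with T nonempty, plus one
  pair standing for the words that lead to the empty set.\<close>
definition fooling_index :: "nat \<Rightarrow> nat \<Rightarrow> (nat set \<times> nat) set" where
  "fooling_index m n = insert ({}, 0) ((Pow {..<m} - {{}}) \<times> {..<n})"

lemma card_fooling_index: "card (fooling_index m n) = (2 ^ m - 1) * n + 1"
proof -
  have "({}, 0) \<notin> (Pow {..<m} - {{}}) \<times> {..<n}" by auto
  then show ?thesis unfolding fooling_index_def by (simp add: card_cartesian_product card_Pow)
qed

lemma fooling_index_separated:
  assumes "0 < n" "(T, j) \<in> fooling_index m n" "(T', j') \<in> fooling_index m n" "(T, j) \<noteq> (T', j')"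
  shows "\<exists>p < m. \<exists>j0 < n. (p \<in> T \<and> j = j0) \<noteq> (p \<in> T' \<and> j' = j0)"
proof -
  have sub: "T \<subseteq> {..<m}" "T' \<subseteq> {..<m}" and idx: "j < n" "j' < n"
    and empty: "T = {} \<Longrightarrow> j = 0" "T' = {} \<Longrightarrow> j' = 0"
    using assms(1-3) unfolding fooling_index_def by auto
  show ?thesis
  proof (cases "T = T'")
    case True
    with assms(4) empty have "j \<noteq> j'" "T \<noteq> {}" by auto
    then obtain p where "p \<in> T" by blast
    then show ?thesis using sub idx \<open>j \<noteq> j'\<close> by blast
  next
    case False
    then obtain p where "p \<in> T \<longleftrightarrow> p \<notin> T'" by blast
    then show ?thesis using sub idx by (cases "j = j'"; cases "p \<in> T") blast+
  qed
qed

theorem witness_lower_bound: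
  assumes "m \<ge> 2" "n \<ge> 2" and D: "is_dfa (witness_alphabet m n) (D :: (nat, nat) dfa)"
    and L: "lang (witness_alphabet m n) D =
              reversal (lang (witness_alphabet m n) (witness_M m)) \<inter> lang (witness_alphabet m n) (witness_N m n)"
  shows "(2 ^ m - 1) * n + 1 \<le> card (states D)"
proof -
  let ?\<Sigma> = "witness_alphabet m n"
  let ?word = "\<lambda>(T, j). [select_letter j, set_letter T]"
  have "card (fooling_index m n) \<le> card (states D)"
  proof (rule distinguishable_words_card_le[OF D])
    fix i assume "i \<in> fooling_index m n"
    then show "?word i \<in> lists ?\<Sigma>"
      using assms(2) unfolding fooling_index_def witness_alphabet_def by auto
  next
    fix i i' assume i: "i \<in> fooling_index m n" and i': "i' \<in> fooling_index m n" and "i \<noteq> i'"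
    obtain T j T' j' where ij: "i = (T, j)" "i' = (T', j')" by fastforce
    obtain p j0 where p: "p < m" "j0 < n" and sep: "(p \<in> T \<and> j = j0) \<noteq> (p \<in> T' \<and> j' = j0)"
      using fooling_index_separated[of n T j m T' j'] assms(2) i i' \<open>i \<noteq> i'\<close> unfolding ij by auto
    have "T \<subseteq> {..<m}" "j < n" "T' \<subseteq> {..<m}" "j' < n"
      using i i' assms(2) ij unfolding fooling_index_def by auto
    then have "(?word i @ [test_letter m p j0] \<in> lang ?\<Sigma> D) \<noteq> (?word i' @ [test_letter m p j0] \<in> lang ?\<Sigma> D)"
      using sep witness_acceptance[OF assms(1,2) _ _ p] L ij by simp
    moreover have "[test_letter m p j0] \<in> lists ?\<Sigma>"
      using p unfolding witness_alphabet_def by auto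
    ultimately show "\<exists>z \<in> lists ?\<Sigma>. (?word i @ z \<in> lang ?\<Sigma> D) \<noteq> (?word i' @ z \<in> lang ?\<Sigma> D)"
      by blast
  qed
  then show ?thesis by (simp add: card_fooling_index)
qed

theorem theorem12:
  fixes m n :: nat
  assumes "m \<ge> 2" and "n \<ge> 2"
  shows "(\<forall>(\<Sigma> :: 'a set) (M :: ('s, 'a) dfa) (N :: ('t, 'a) dfa).
            is_dfa \<Sigma> M \<and> card (states M) = m \<and> is_dfa \<Sigma> N \<and> card (states N) = n \<longrightarrow>
            (\<exists>D :: (nat, 'a) dfa. is_dfa \<Sigma> D \<and> card (states D) \<le> 2 ^ m * n - n + 1 \<and>
               lang \<Sigma> D = reversal (lang \<Sigma> M) \<inter> lang \<Sigma> N))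
       \<and> (\<exists>(\<Sigma> :: nat set) (M :: (nat, nat) dfa) (N :: (nat, nat) dfa).
            is_dfa \<Sigma> M \<and> card (states M) = m \<and> is_dfa \<Sigma> N \<and> card (states N) = n \<and>
            state_complexity \<Sigma> (reversal (lang \<Sigma> M) \<inter> lang \<Sigma> N) = 2 ^ m * n - n + 1)"
proof -
  have bound: "2 ^ m * n - n + 1 = (2 ^ m - 1) * n + 1" by (simp add: diff_mult_distrib)
  let ?\<Sigma> = "witness_alphabet m n"
  let ?L = "reversal (lang ?\<Sigma> (witness_M m)) \<inter> lang ?\<Sigma> (witness_N m n)"
  have M: "is_dfa ?\<Sigma> (witness_M m)" and N: "is_dfa ?\<Sigma> (witness_N m n)"
    using assms witness_M_is_dfa witness_N_is_dfa by auto
  obtain D :: "(nat, nat) dfa" where "is_dfa ?\<Sigma> D" "card (states D) = (2 ^ m - 1) * n + 1" "lang ?\<Sigma> D = ?L"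
    using rev_inter_upper_bound[OF M N] by (auto simp: card_witness_states)
  then have complexity: "state_complexity ?\<Sigma> ?L = (2 ^ m - 1) * n + 1"
    using witness_lower_bound[OF assms] by (intro state_complexity_eqI) auto
  have upper: "\<exists>D :: (nat, 'a) dfa. is_dfa \<Sigma> D \<and> card (states D) \<le> (2 ^ m - 1) * n + 1
                 \<and> lang \<Sigma> D = reversal (lang \<Sigma> M') \<inter> lang \<Sigma> N'"
    if "is_dfa \<Sigma> M'" "card (states M') = m" "is_dfa \<Sigma> N'" "card (states N') = n"
    for \<Sigma> :: "'a set" and M' :: "('s, 'a) dfa" and N' :: "('t, 'a) dfa"
    using rev_inter_upper_bound[OF that(1,3)] that(2,4) by fastforce
  show ?thesis
    unfolding bound
  proof
    show "\<forall>(\<Sigma> :: 'a set) (M :: ('s, 'a) dfa) (N :: ('t, 'a) dfa).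
            is_dfa \<Sigma> M \<and> card (states M) = m \<and> is_dfa \<Sigma> N \<and> card (states N) = n \<longrightarrow>
            (\<exists>D :: (nat, 'a) dfa. is_dfa \<Sigma> D \<and> card (states D) \<le> (2 ^ m - 1) * n + 1 \<and>
               lang \<Sigma> D = reversal (lang \<Sigma> M) \<inter> lang \<Sigma> N)"
      using upper by simp
    show "\<exists>(\<Sigma> :: nat set) (M :: (nat, nat) dfa) (N :: (nat, nat) dfa).
            is_dfa \<Sigma> M \<and> card (states M) = m \<and> is_dfa \<Sigma> N \<and> card (states N) = n \<and>
            state_complexity \<Sigma> (reversal (lang \<Sigma> M) \<inter> lang \<Sigma> N) = (2 ^ m - 1) * n + 1"
      using M N complexity
      by (intro exI[of _ ?\<Sigma>] exI[of _ "witness_M m"] exI[of _ "witness_N m n"])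
         (simp add: card_witness_states)
  qed
qed

end
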